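(* Consider the Three-queue system (setting in the context) operating under a scheduling policy that achieves state space collapse. Let $\tilde{\boldsymbol\theta}\in\mathbb C^3$, let $\boldsymbol\theta$ be its projection onto $\mathcal S$ (real and imaginary parts projected separately), and suppose $\boldsymbol\phi\in\mathbb C^2$ is such that $\boldsymbol\theta=\mathbf B\boldsymbol\phi\in\Theta$, where $\Theta=\{\boldsymbol\theta\in\mathbb C^3:\mathrm{Re}(\boldsymbol\theta),\mathrm{Im}(\boldsymbol\theta)\in\mathcal S,\ \mathrm{Re}(\mathbf B^T\boldsymbol\theta)\le\mathbf 0\}$. Writing $\langle\tilde{\boldsymbol\theta},\mathbf q\rangle=\sum_i\tilde\theta_iq_i$, the following hold (all expectations under the stationary distribution): 1. $\lim_{\epsilon\to0}|\mathbb E[e^{\epsilon\langle\tilde{\boldsymbol\theta},\mathbf q\rangle}]|<\infty$, $\lim_{\epsilon\to0}\frac1\epsilon|\mathbb E[u_2e^{\epsilon\langle\tilde{\boldsymbol\theta},\mathbf q\rangle}]|<\infty$, $\lim_{\epsilon\to0}\frac1\epsilon|\mathbb E[u_3e^{\epsilon\langle\tilde{\boldsymbol\theta},\mathbf q\rangle}]|<\infty$, and the same holds with $\tilde{\boldsymbol\theta}$ replaced by $\boldsymbol\theta$; 2. $\lim_{\epsilon\to0}\mathbb E[e^{\epsilon\langle\tilde{\boldsymbol\theta},\mathbf q\rangle}]=\lim_{\epsilon\to0}\mathbb E[e^{\epsilon\langle\boldsymbol\theta,\mathbf q\rangle}]=\lim_{\epsilon\to0}\mathbb E[e^{\epsilon((2\phi_1+\phi_2)q_2+(\phi_1+2\phi_2)q_3)}]$;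 3. $\lim_{\epsilon\to0}\frac1\epsilon\mathbb E[u_2e^{\epsilon\langle\tilde{\boldsymbol\theta},\mathbf q\rangle}]=\lim_{\epsilon\to0}\frac1\epsilon\mathbb E[u_2e^{\epsilon\langle\boldsymbol\theta,\mathbf q\rangle}]=\lim_{\epsilon\to0}\frac1\epsilon\mathbb E[u_2e^{\epsilon(\phi_1+2\phi_2)q_3}]$; 4. $\lim_{\epsilon\to0}\frac1\epsilon\mathbb E[u_3e^{\epsilon\langle\tilde{\boldsymbol\theta},\mathbf q\rangle}]=\lim_{\epsilon\to0}\frac1\epsilon\mathbb E[u_3e^{\epsilon\langle\boldsymbol\theta,\mathbf q\rangle}]=\lim_{\epsilon\to0}\frac1\epsilon\mathbb E[u_3e^{\epsilon(2\phi_1+\phi_2)q_2}]$.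
   Context: Three-queue system: discrete time, queue vector $(q_1,q_2,q_3)$; arrivals $\mathbf a(t)\in\mathbb Z^3_{\ge0}$ i.i.d. over $t$, bounded by $a_{\max}$, mean $\boldsymbol\lambda$, diagonal covariance. Schedules $(1,0,0)$ (chosen only if $q_1>0$) and $(0,1,1)$; $\mathbf q(t+1)=[\mathbf q(t)+\mathbf a(t)-\mathbf s(t)]^+=\mathbf q(t)+\mathbf a(t)-\mathbf s(t)+\mathbf u(t)$ with unused service $\mathbf u(t)\in\{0,1\}^3$. The chain is irreducible, aperiodic, positive recurrent; $\mathbf q$ is stationary and $\mathbf u$ is the unused service in one step from stationarity. $\boldsymbol\lambda=(1-\epsilon)\boldsymbol\nu$ with $\nu_1+\nu_2=\nu_1+\nu_3=1$, $\min\nu_i>0$, $\epsilon\in(0,1)$. $\mathbf B=\begin{bmatrix}1&1\\1&0\\0&1\end{bmatrix}$, $\mathcal S=\{\mathbf y\in\mathbb R^3:y_1=y_2+y_3\}$, $\mathbf q_\perp$ the component of $\mathbf q$ orthogonal to $\mathcal S$. State space collapse: for every $\theta\in\mathbb R$ there exist $\epsilon(\theta)>0$ and $C^\star<\infty$ with $\mathbb E[e^{\epsilon\theta\|\mathbf q_\perp\|}]<C^\star$ for $0<\epsilon\le\epsilon(\theta)$, and $\mathbb E\|\mathbf q_\perp\|^r\le C_r$ for every $r\ge1$, with $C_r$ independent of $\epsilon$. *)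

theory Defs
  imports "HOL-Analysis.Analysis" "HOL-Probability.Probability"
begin

definition sched :: "bool \<Rightarrow> nat ^ 3" where
  "sched b = (if b then vector [1, 0, 0] else vector [0, 1, 1])"

text \<open>q(t+1) = [q + a - s]^+ (componentwise, truncated subtraction on nat)\<close>
definition next_state :: "nat ^ 3 \<Rightarrow> nat ^ 3 \<Rightarrow> bool \<Rightarrow> nat ^ 3" where
  "next_state q a b = (\<chi> i. (q $ i + a $ i) - sched b $ i)"

text \<open>unused service u = [q + a - s]^+ - (q + a - s) = [s - q - a]^+\<close>
definition unused :: "nat ^ 3 \<Rightarrow> nat ^ 3 \<Rightarrow> bool \<Rightarrow> nat ^ 3" where
  "unused q a b = (\<chi> i. sched b $ i - (q $ i + a $ i))"

definition kernel :: "(nat ^ 3) pmf \<Rightarrow> (nat ^ 3 \<Rightarrow> bool pmf) \<Rightarrow> nat ^ 3 \<Rightarrow> (nat ^ 3) pmf" where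
  "kernel A pol q = A \<bind> (\<lambda>a. map_pmf (next_state q a) (pol q))"

fun kernel_pow :: "(nat ^ 3) pmf \<Rightarrow> (nat ^ 3 \<Rightarrow> bool pmf) \<Rightarrow> nat \<Rightarrow> nat ^ 3 \<Rightarrow> (nat ^ 3) pmf" where
  "kernel_pow A pol 0 q = return_pmf q"
| "kernel_pow A pol (Suc n) q = kernel_pow A pol n q \<bind> kernel A pol"

definition step_dist :: "(nat ^ 3) pmf \<Rightarrow> (nat ^ 3) pmf \<Rightarrow> (nat ^ 3 \<Rightarrow> bool pmf)
    \<Rightarrow> ((nat ^ 3) \<times> (nat ^ 3) \<times> bool) pmf" where
  "step_dist \<pi> A pol = \<pi> \<bind> (\<lambda>q. A \<bind> (\<lambda>a. map_pmf (\<lambda>b. (q, a, b)) (pol q)))"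

definition S_set :: "(real ^ 3) set" where
  "S_set = {y. y $ 1 = y $ 2 + y $ 3}"

definition qvec :: "nat ^ 3 \<Rightarrow> real ^ 3" where
  "qvec q = (\<chi> i. real (q $ i))"

definition qperp :: "nat ^ 3 \<Rightarrow> real ^ 3" where
  "qperp q = qvec q - closest_point S_set (qvec q)"

definition projC :: "complex ^ 3 \<Rightarrow> complex ^ 3" where
  "projC \<theta> = (\<chi> i. Complex (closest_point S_set (\<chi> j. Re (\<theta> $ j)) $ i)
                           (closest_point S_set (\<chi> j. Im (\<theta> $ j)) $ i))"

definition Bmat :: "complex ^ 2 ^ 3" where
  "Bmat = vector [vector [1, 1], vector [1, 0], vector [0, 1]]"

definition Theta :: "(complex ^ 3) set" where
  "Theta = {\<theta>. (\<chi> i. Re (\<theta> $ i)) \<in> S_set \<and> (\<chi> i. Im (\<theta> $ i)) \<in> S_set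
              \<and> (\<forall>j. Re ((transpose Bmat *v \<theta>) $ j) \<le> 0)}"

definition cinner :: "complex ^ 3 \<Rightarrow> nat ^ 3 \<Rightarrow> complex" where
  "cinner \<theta> q = (\<Sum>i\<in>UNIV. \<theta> $ i * of_nat (q $ i))"

definition Eexp :: "(nat ^ 3) pmf \<Rightarrow> (nat ^ 3 \<Rightarrow> complex) \<Rightarrow> complex" where
  "Eexp p g = measure_pmf.expectation p (\<lambda>q. exp (g q))"

definition Eu :: "((nat ^ 3) \<times> (nat ^ 3) \<times> bool) pmf \<Rightarrow> 3 \<Rightarrow> (nat ^ 3 \<Rightarrow> complex) \<Rightarrow> complex" where
  "Eu p i g = measure_pmf.expectation p (\<lambda>(q, a, b). of_nat (unused q a b $ i) * exp (g q))"

end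

theory Submission
  imports Defs
begin

text \<open>
  The three exponents \<open>\<langle>\<theta>\<^sup>~, q\<rangle>\<close>, \<open>\<langle>\<theta>, q\<rangle>\<close> and \<open>(2\<phi>\<^sub>1 + \<phi>\<^sub>2) q\<^sub>2 + (\<phi>\<^sub>1 + 2\<phi>\<^sub>2) q\<^sub>3\<close>
  differ from each other by multiples of the imbalance \<open>q\<^sub>1 - q\<^sub>2 - q\<^sub>3\<close>, which is at most
  \<open>3 \<parallel>q\<^sub>\<bottom>\<parallel>\<close>, and since \<open>Re (B\<^sup>T \<theta>) \<le> 0\<close> all of them have real part at most
  \<open>K \<parallel>q\<^sub>\<bottom>\<parallel>\<close>. Hence the corresponding exponentials differ by at most
  \<open>\<epsilon> K \<parallel>q\<^sub>\<bottom>\<parallel> exp (\<epsilon> K \<parallel>q\<^sub>\<bottom>\<parallel>)\<close>, whose mean is \<open>O(\<epsilon>)\<close> by state space collapse.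
  For the unused-service terms, stationarity gives \<open>E u\<^sub>2 = E u\<^sub>3 = \<epsilon>\<close>, and \<open>u\<^sub>2 \<noteq> 0\<close> forces
  \<open>q\<^sub>2 = 0\<close> (similarly for \<open>u\<^sub>3\<close>); as \<open>u\<^sub>i \<le> 1\<close>, Young's inequality with weight \<open>\<surd>\<epsilon>\<close>
  bounds the differences by \<open>\<epsilon>\<surd>\<epsilon> = o(\<epsilon>)\<close>.
\<close>

section \<open>Projection onto \<open>S_set\<close> and the exponents\<close>

definition imbalance :: "nat ^ 3 \<Rightarrow> real" where
  "imbalance q = real (q $ 1) - real (q $ 2) - real (q $ 3)"

lemma subspace_S_set: "subspace S_set"
  unfolding subspace_def S_set_def by (auto simp: algebra_simps)

lemma closest_point_S_set:
  "closest_point S_set x = x - ((x $ 1 - x $ 2 - x $ 3) / 3) *\<^sub>R (vector [1, -1, -1] :: real ^ 3)"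
proof (rule closest_point_unique[symmetric])
  define t where "t = (x $ 1 - x $ 2 - x $ 3) / 3"
  define p where "p = x - t *\<^sub>R (vector [1, -1, -1] :: real ^ 3)"
  show "convex S_set" "closed S_set"
    using subspace_S_set by (simp_all add: subspace_imp_convex closed_subspace)
  show "p \<in> S_set"
    by (simp add: p_def t_def S_set_def vector_def field_simps)
  show "\<forall>z\<in>S_set. dist x p \<le> dist x z"
  proof
    fix z assume "z \<in> S_set"
    then have z1: "z $ 1 = z $ 2 + z $ 3" by (simp add: S_set_def)
    have dist2: "(dist x y)\<^sup>2 = (x $ 1 - y $ 1)\<^sup>2 + (x $ 2 - y $ 2)\<^sup>2 + (x $ 3 - y $ 3)\<^sup>2" for y
      by (simp add: dist_norm norm_vec_def L2_set_def sum_3)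
    have p: "p $ 1 = x $ 1 - t" "p $ 2 = x $ 2 + t" "p $ 3 = x $ 3 + t"
      by (simp_all add: p_def vector_def)
    have "(dist x z)\<^sup>2 = 3 * t\<^sup>2 + ((p $ 1 - z $ 1)\<^sup>2 + (p $ 2 - z $ 2)\<^sup>2 + (p $ 3 - z $ 3)\<^sup>2)"
      unfolding dist2 p using z1 by (simp add: t_def power2_eq_square field_simps)
    moreover have "(dist x p)\<^sup>2 = 3 * t\<^sup>2"
      unfolding dist2 p by simp
    ultimately have "(dist x p)\<^sup>2 \<le> (dist x z)\<^sup>2" by simp
    then show "dist x p \<le> dist x z" by (rule power2_le_imp_le) simp
  qed
qed

lemma qperp_eq: "qperp q = (imbalance q / 3) *\<^sub>R (vector [1, -1, -1] :: real ^ 3)"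
  by (simp add: qperp_def closest_point_S_set qvec_def imbalance_def)

lemma abs_imbalance_le: "\<bar>imbalance q\<bar> \<le> 3 * norm (qperp q)"
  using component_le_norm_cart[of "qperp q" 1] by (simp add: qperp_eq vector_def)

lemma cinner_diff_projC:
  "cinner \<theta> q - cinner (projC \<theta>) q = (\<theta> $ 1 - \<theta> $ 2 - \<theta> $ 3) / 3 * of_real (imbalance q)"
proof -
  define c where "c = (\<theta> $ 1 - \<theta> $ 2 - \<theta> $ 3) / 3"
  have pc: "projC \<theta> $ 1 = \<theta> $ 1 - c" "projC \<theta> $ 2 = \<theta> $ 2 + c" "projC \<theta> $ 3 = \<theta> $ 3 + c"
    by (simp_all add: projC_def closest_point_S_set vector_def complex_eq_iff c_def field_simps)
  have "cinner \<theta> q - cinner (projC \<theta>) q = c * of_real (imbalance q)"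
    by (simp add: cinner_def sum_3 pc imbalance_def algebra_simps)
  then show ?thesis by (simp add: c_def)
qed

lemma Bmat_mult_vec:
  "(Bmat *v \<phi>) $ 1 = \<phi> $ 1 + \<phi> $ 2" "(Bmat *v \<phi>) $ 2 = \<phi> $ 1" "(Bmat *v \<phi>) $ 3 = \<phi> $ 2"
  by (simp_all add: Bmat_def matrix_vector_mult_def sum_2 vector_def)

lemma cinner_Bmat:
  "cinner (Bmat *v \<phi>) q = (2 * \<phi> $ 1 + \<phi> $ 2) * of_nat (q $ 2) + (\<phi> $ 1 + 2 * \<phi> $ 2) * of_nat (q $ 3)
     + (\<phi> $ 1 + \<phi> $ 2) * of_real (imbalance q)"
  by (simp add: cinner_def sum_3 Bmat_mult_vec imbalance_def algebra_simps)

lemma Re_nonpos_if_Bmat_in_Theta: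
  assumes "Bmat *v \<phi> \<in> Theta"
  shows "Re (2 * \<phi> $ 1 + \<phi> $ 2) \<le> 0" "Re (\<phi> $ 1 + 2 * \<phi> $ 2) \<le> 0"
proof -
  have BT: "(transpose Bmat *v v) $ 1 = v $ 1 + v $ 2" "(transpose Bmat *v v) $ 2 = v $ 1 + v $ 3"
    for v :: "complex ^ 3"
    by (simp_all add: Bmat_def transpose_def matrix_vector_mult_def sum_3 vector_def)
  have "Re ((transpose Bmat *v (Bmat *v \<phi>)) $ j) \<le> 0" for j
    using assms by (simp add: Theta_def)
  from this[of 1] this[of 2] show "Re (2 * \<phi> $ 1 + \<phi> $ 2) \<le> 0" "Re (\<phi> $ 1 + 2 * \<phi> $ 2) \<le> 0"
    unfolding BT Bmat_mult_vec by simp_all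
qed

lemma norm_imbalance_le:
  "cmod (z * of_real (imbalance q)) \<le> 3 * cmod z * norm (qperp q)"
  using mult_left_mono[OF abs_imbalance_le norm_ge_zero] by (simp add: norm_mult mult_ac)

lemma Re_le_if_norm_diff_le: "Re h \<le> 0 \<Longrightarrow> cmod (g - h) \<le> b \<Longrightarrow> Re g \<le> b"
  using complex_Re_le_cmod[of "g - h"] by simp

locale projected_direction =
  fixes \<theta> :: "complex ^ 3" and \<phi> :: "complex ^ 2"
  assumes projC_eq: "projC \<theta> = Bmat *v \<phi>" and Bmat_in_Theta: "Bmat *v \<phi> \<in> Theta"
begin

abbreviation perp_coeff :: complex where
  "perp_coeff \<equiv> (\<theta> $ 1 - \<theta> $ 2 - \<theta> $ 3) / 3"

abbreviation exponent2 :: "nat ^ 3 \<Rightarrow> complex" where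
  "exponent2 q \<equiv> (2 * \<phi> $ 1 + \<phi> $ 2) * of_nat (q $ 2)"

abbreviation exponent3 :: "nat ^ 3 \<Rightarrow> complex" where
  "exponent3 q \<equiv> (\<phi> $ 1 + 2 * \<phi> $ 2) * of_nat (q $ 3)"

definition dominating_const :: real where
  "dominating_const = 3 * (cmod perp_coeff + cmod (\<phi> $ 1 + \<phi> $ 2))"

lemma dominating_const_nonneg: "0 \<le> dominating_const"
  by (simp add: dominating_const_def)

lemma dominating_const_mult:
  "dominating_const * x = 3 * cmod perp_coeff * x + 3 * cmod (\<phi> $ 1 + \<phi> $ 2) * x"
  by (simp add: dominating_const_def algebra_simps)

lemma cinner_projC_diff_exponents:
  "cinner (projC \<theta>) q - (exponent2 q + exponent3 q) = (\<phi> $ 1 + \<phi> $ 2) * of_real (imbalance q)"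
  by (simp add: projC_eq cinner_Bmat)

lemma norm_cinner_diff_projC_le:
  "cmod (cinner \<theta> q - cinner (projC \<theta>) q) \<le> dominating_const * norm (qperp q)"
  using norm_imbalance_le[of perp_coeff q] norm_imbalance_le[of "\<phi> $ 1 + \<phi> $ 2" q]
    norm_ge_zero[of "(\<phi> $ 1 + \<phi> $ 2) * of_real (imbalance q)"]
  unfolding dominating_const_mult cinner_diff_projC by linarith

lemma norm_cinner_projC_diff_exponents_le:
  "cmod (cinner (projC \<theta>) q - (exponent2 q + exponent3 q)) \<le> dominating_const * norm (qperp q)"
  using norm_imbalance_le[of perp_coeff q] norm_imbalance_le[of "\<phi> $ 1 + \<phi> $ 2" q]
    norm_ge_zero[of "perp_coeff * of_real (imbalance q)"]
  unfolding dominating_const_mult cinner_projC_diff_exponents by linarith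

lemma norm_cinner_diff_exponents_le:
  "cmod (cinner \<theta> q - (exponent2 q + exponent3 q)) \<le> dominating_const * norm (qperp q)"
proof -
  have decomposition: "cinner \<theta> q - (exponent2 q + exponent3 q)
      = perp_coeff * of_real (imbalance q) + (\<phi> $ 1 + \<phi> $ 2) * of_real (imbalance q)"
    unfolding cinner_diff_projC[symmetric] cinner_projC_diff_exponents[symmetric] by simp
  show ?thesis
    using norm_imbalance_le[of perp_coeff q] norm_imbalance_le[of "\<phi> $ 1 + \<phi> $ 2" q]
      norm_triangle_ineq[of "perp_coeff * of_real (imbalance q)" "(\<phi> $ 1 + \<phi> $ 2) * of_real (imbalance q)"]
    unfolding dominating_const_mult decomposition by linarith
qed

lemma norm_cinner_projC_diff_exponent3_le:
  "q $ 2 = 0 \<Longrightarrow> cmod (cinner (projC \<theta>) q - exponent3 q) \<le> dominating_const * norm (qperp q)"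
  using norm_cinner_projC_diff_exponents_le[of q] by simp

lemma norm_cinner_projC_diff_exponent2_le:
  "q $ 3 = 0 \<Longrightarrow> cmod (cinner (projC \<theta>) q - exponent2 q) \<le> dominating_const * norm (qperp q)"
  using norm_cinner_projC_diff_exponents_le[of q] by simp

lemma Re_exponents_nonpos:
  "Re (exponent2 q) \<le> 0" "Re (exponent3 q) \<le> 0" "Re (exponent2 q + exponent3 q) \<le> 0"
  using Re_nonpos_if_Bmat_in_Theta[OF Bmat_in_Theta]
  by (simp_all add: mult_nonpos_nonneg add_nonpos_nonpos)

lemma Re_exponents_le:
  "Re (exponent2 q) \<le> dominating_const * norm (qperp q)"
  "Re (exponent3 q) \<le> dominating_const * norm (qperp q)"
  "Re (exponent2 q + exponent3 q) \<le> dominating_const * norm (qperp q)"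
  using Re_exponents_nonpos[of q] mult_nonneg_nonneg[OF dominating_const_nonneg norm_ge_zero, of "qperp q"]
  by linarith+

lemma Re_cinner_projC_le: "Re (cinner (projC \<theta>) q) \<le> dominating_const * norm (qperp q)"
  by (rule Re_le_if_norm_diff_le[OF Re_exponents_nonpos(3) norm_cinner_projC_diff_exponents_le])

lemma Re_cinner_le: "Re (cinner \<theta> q) \<le> dominating_const * norm (qperp q)"
  by (rule Re_le_if_norm_diff_le[OF Re_exponents_nonpos(3) norm_cinner_diff_exponents_le])

end

section \<open>Unused service under stationarity\<close>

definition unused_service :: "3 \<Rightarrow> (nat ^ 3) \<times> (nat ^ 3) \<times> bool \<Rightarrow> real" where
  "unused_service i = (\<lambda>(q, a, b). real (unused q a b $ i))"

lemma Eu_eq_expectation_unused_service: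
  "Eu p i g = measure_pmf.expectation p (\<lambda>x. of_real (unused_service i x) * exp (g (fst x)))"
  unfolding Eu_def unused_service_def by (rule Bochner_Integration.integral_cong) (auto split: prod.splits)

lemma sched_nth:
  "sched b $ 1 = (if b then 1 else 0)" "sched b $ 2 = (if b then 0 else 1)" "sched b $ 3 = (if b then 0 else 1)"
  by (simp_all add: sched_def vector_def)

lemma sched_le_1: "sched b $ i \<le> 1"
  using exhaust_3[of i] by (auto simp: sched_nth)

lemma unused_service_nonneg: "0 \<le> unused_service i x"
  by (simp add: unused_service_def split: prod.splits)

lemma unused_service_le_1: "unused_service i x \<le> 1"
proof (cases x)
  case (fields q a b)
  have "sched b $ i - (q $ i + a $ i) \<le> 1" using sched_le_1[of b i] by linarith
  then show ?thesis by (simp add: fields unused_service_def unused_def)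
qed

lemma queue_empty_if_unused_service: "unused_service i x \<noteq> 0 \<Longrightarrow> fst x $ i = 0"
proof (cases x)
  case (fields q a b)
  then show "unused_service i x \<noteq> 0 \<Longrightarrow> fst x $ i = 0"
    using sched_le_1[of b i] by (simp add: unused_service_def unused_def)
qed

lemma of_nat_next_state:
  "real (next_state q a b $ i) = real (q $ i) + real (a $ i) - real (sched b $ i) + real (unused q a b $ i)"
  by (cases "sched b $ i \<le> q $ i + a $ i") (auto simp: next_state_def unused_def)

lemma expectation_diff_eq_0_if_same_law:
  fixes f g :: "'a \<Rightarrow> nat"
  assumes same_law: "map_pmf f X = map_pmf g X"
    and bounded: "\<And>x. x \<in> set_pmf X \<Longrightarrow> \<bar>real (f x) - real (g x)\<bar> \<le> B"
  shows "measure_pmf.expectation X (\<lambda>x. real (f x) - real (g x)) = 0"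
proof -
  \<comment> \<open>\<open>f\<close> and \<open>g\<close> need not be integrable, so compare their truncations at level \<open>M\<close>\<close>
  define h where "h M x = real (min (f x) M) - real (min (g x) M)" for M x
  have "measure_pmf.expectation X (h M) = 0" for M
  proof -
    have "measure_pmf.expectation X (\<lambda>x. real (min (f x) M))
        = measure_pmf.expectation X (\<lambda>x. real (min (g x) M))"
      using integral_map_pmf[of f X "\<lambda>y. real (min y M)"] integral_map_pmf[of g X "\<lambda>y. real (min y M)"]
      by (simp add: same_law)
    moreover have int: "integrable (measure_pmf X) (\<lambda>x. real (min (k x) M))" for k :: "'a \<Rightarrow> nat"
      by (rule measure_pmf.integrable_const_bound[where B = "real M"]) auto
    ultimately show ?thesis
      unfolding h_def by (simp add: Bochner_Integration.integral_diff[OF int[of f] int[of g]])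
  qed
  moreover have "(\<lambda>M. measure_pmf.expectation X (h M))
      \<longlonglongrightarrow> measure_pmf.expectation X (\<lambda>x. real (f x) - real (g x))"
  proof (rule integral_dominated_convergence[where w = "\<lambda>_. B"])
    show "AE x in measure_pmf X. (\<lambda>M. h M x) \<longlonglongrightarrow> real (f x) - real (g x)"
    proof (rule AE_pmfI)
      fix x
      have "\<forall>\<^sub>F M in sequentially. h M x = real (f x) - real (g x)"
        by (rule eventually_sequentiallyI[of "max (f x) (g x)"]) (simp add: h_def)
      then show "(\<lambda>M. h M x) \<longlonglongrightarrow> real (f x) - real (g x)" by (rule tendsto_eventually)
    qed
    show "AE x in measure_pmf X. norm (h M x) \<le> B" for M
    proof (rule AE_pmfI)
      fix x assume "x \<in> set_pmf X"
      have "\<bar>h M x\<bar> \<le> \<bar>real (f x) - real (g x)\<bar>" by (auto simp: h_def min_def)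
      then show "norm (h M x) \<le> B" using bounded[OF \<open>x \<in> set_pmf X\<close>] by simp
    qed
  qed auto
  ultimately show ?thesis by (simp add: LIMSEQ_const_iff)
qed

lemma map_fst_step_dist: "map_pmf fst (step_dist \<pi> A pol) = \<pi>"
  by (simp add: step_dist_def map_bind_pmf map_pmf_comp bind_return_pmf')

lemma map_arrivals_step_dist: "map_pmf (\<lambda>x. fst (snd x)) (step_dist \<pi> A pol) = A"
  by (simp add: step_dist_def map_bind_pmf map_pmf_comp bind_return_pmf')

lemma map_next_state_step_dist:
  "map_pmf (\<lambda>(q, a, b). next_state q a b) (step_dist \<pi> A pol) = \<pi> \<bind> kernel A pol"
  by (simp add: step_dist_def Defs.kernel_def[abs_def] map_bind_pmf map_pmf_comp)

lemma set_pmf_step_dist: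
  "x \<in> set_pmf (step_dist \<pi> A pol) \<Longrightarrow>
     fst x \<in> set_pmf \<pi> \<and> fst (snd x) \<in> set_pmf A \<and> snd (snd x) \<in> set_pmf (pol (fst x))"
  by (auto simp: step_dist_def)

lemma expectation_unused_service:
  assumes stationary: "\<pi> \<bind> kernel A pol = \<pi>"
    and bounded: "\<forall>a\<in>set_pmf A. \<forall>i. a $ i \<le> amax"
  shows "measure_pmf.expectation (step_dist \<pi> A pol) (unused_service i)
       = measure_pmf.expectation (step_dist \<pi> A pol) (\<lambda>(q, a, b). real (sched b $ i))
         - measure_pmf.expectation A (\<lambda>a. real (a $ i))"
proof -
  define X where "X = step_dist \<pi> A pol"
  define s where "s = (\<lambda>(q :: nat ^ 3, a :: nat ^ 3, b). real (sched b $ i))"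
  define r where "r x = real (fst (snd x) $ i)" for x :: "(nat ^ 3) \<times> (nat ^ 3) \<times> bool"
  have s_bounds: "0 \<le> s x" "s x \<le> 1" for x
    using sched_le_1[of _ i] by (auto simp: s_def split: prod.splits)
  have r_bounds: "0 \<le> r x" "r x \<le> real amax" if "x \<in> set_pmf X" for x
    using that bounded set_pmf_step_dist unfolding X_def r_def by fastforce+
  define nxt where "nxt x = next_state (fst x) (fst (snd x)) (snd (snd x)) $ i" for x
  have "map_pmf nxt X = map_pmf (\<lambda>q. q $ i) (\<pi> \<bind> kernel A pol)"
    by (simp add: X_def nxt_def[abs_def] map_pmf_comp case_prod_unfold flip: map_next_state_step_dist)
  also have "\<pi> \<bind> kernel A pol = map_pmf fst X"
    by (simp add: X_def map_fst_step_dist stationary)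
  finally have same_law: "map_pmf nxt X = map_pmf (\<lambda>x. fst x $ i) X"
    by (simp add: map_pmf_comp)
  have increment: "real (nxt x) - real (fst x $ i) = r x - s x + unused_service i x" for x
    by (simp add: nxt_def of_nat_next_state r_def s_def unused_service_def split: prod.splits)
  have "\<bar>real (nxt x) - real (fst x $ i)\<bar> \<le> real amax + 1" if "x \<in> set_pmf X" for x
    using r_bounds[OF that] s_bounds[of x] unused_service_nonneg[of i x] unused_service_le_1[of i x]
    unfolding increment by linarith
  from expectation_diff_eq_0_if_same_law[OF same_law this]
  have "measure_pmf.expectation X (\<lambda>x. r x - s x + unused_service i x) = 0"
    by (simp add: increment)
  moreover have "integrable (measure_pmf X) r"
    using r_bounds by (intro measure_pmf.integrable_const_bound[where B = "real amax"] AE_pmfI) auto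
  moreover have "integrable (measure_pmf X) s" "integrable (measure_pmf X) (unused_service i)"
    using s_bounds unused_service_nonneg[of i] unused_service_le_1[of i]
    by (auto intro!: measure_pmf.integrable_const_bound[where B = 1])
  moreover have "measure_pmf.expectation X r = measure_pmf.expectation A (\<lambda>a. real (a $ i))"
    using integral_map_pmf[of "\<lambda>x. fst (snd x)" X "\<lambda>a. real (a $ i)"]
    by (simp add: X_def r_def[abs_def] map_arrivals_step_dist)
  ultimately show ?thesis by (simp add: X_def s_def)
qed

lemma expectation_unused_service_eq_eps:
  assumes stationary: "\<pi> \<bind> kernel A pol = \<pi>"
    and bounded: "\<forall>a\<in>set_pmf A. \<forall>i. a $ i \<le> amax"
    and pol: "\<forall>q. True \<in> set_pmf (pol q) \<longrightarrow> q $ 1 > 0"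
    and mean: "\<And>j. measure_pmf.expectation A (\<lambda>a. real (a $ j)) = (1 - \<epsilon>) * \<nu> $ j"
    and i: "i \<noteq> 1" "\<nu> $ 1 + \<nu> $ i = 1"
  shows "measure_pmf.expectation (step_dist \<pi> A pol) (unused_service i) = \<epsilon>"
proof -
  define X where "X = step_dist \<pi> A pol"
  define s where "s j = (\<lambda>(q :: nat ^ 3, a :: nat ^ 3, b). real (sched b $ j))" for j
  have "unused_service 1 x = 0" if "x \<in> set_pmf X" for x
    using that pol set_pmf_step_dist[of x \<pi> A pol]
    by (cases "snd (snd x)") (auto simp: X_def unused_service_def unused_def sched_nth split: prod.splits)
  then have "measure_pmf.expectation X (unused_service 1) = 0"
    by (simp add: integral_eq_zero_AE AE_pmfI)
  then have s1: "measure_pmf.expectation X (s 1) = (1 - \<epsilon>) * \<nu> $ 1"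
    using expectation_unused_service[OF stationary bounded, of 1] by (simp add: X_def s_def mean)
  have "s i = (\<lambda>x. 1 - s 1 x)"
    using i(1) exhaust_3[of i] by (auto simp: s_def sched_nth fun_eq_iff)
  moreover have "integrable (measure_pmf X) (s 1)"
    by (auto simp: s_def sched_nth intro!: measure_pmf.integrable_const_bound[where B = 1])
  ultimately have "measure_pmf.expectation X (s i) = 1 - (1 - \<epsilon>) * \<nu> $ 1"
    using s1 by simp
  moreover have "\<epsilon> * \<nu> $ 1 + \<epsilon> * \<nu> $ i = \<epsilon>"
    using i(2) by (simp flip: distrib_left)
  ultimately show ?thesis
    using expectation_unused_service[OF stationary bounded, of i] i(2)
    by (simp add: X_def s_def mean algebra_simps)
qed

lemma eventually_expectation_unused_service:
  assumes nu: "\<nu> $ 1 + \<nu> $ 2 = 1" "\<nu> $ 1 + \<nu> $ 3 = 1"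
    and pol: "\<forall>q. True \<in> set_pmf (pol q) \<longrightarrow> q $ 1 > 0"
    and arr_bound: "\<forall>\<epsilon>\<in>{0<..<1}. \<forall>a\<in>set_pmf (A \<epsilon>). \<forall>i. a $ i \<le> amax"
    and arr_mean: "\<forall>\<epsilon>\<in>{0<..<1}. \<forall>i.
        measure_pmf.expectation (A \<epsilon>) (\<lambda>a. real (a $ i)) = (1 - \<epsilon>) * \<nu> $ i"
    and stationary: "\<forall>\<epsilon>\<in>{0<..<1}. \<pi> \<epsilon> \<bind> kernel (A \<epsilon>) pol = \<pi> \<epsilon>"
    and "i \<noteq> 1"
  shows "\<forall>\<^sub>F \<epsilon> in at_right 0. map_pmf fst (step_dist (\<pi> \<epsilon>) (A \<epsilon>) pol) = \<pi> \<epsilon>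
    \<and> measure_pmf.expectation (step_dist (\<pi> \<epsilon>) (A \<epsilon>) pol) (unused_service i) = \<epsilon>"
proof -
  have "\<forall>\<^sub>F \<epsilon> in at_right (0 :: real). \<epsilon> \<in> {0<..<1}"
    by (rule eventually_at_rightI[where b = 1]) auto
  moreover have "\<nu> $ 1 + \<nu> $ i = 1"
    using \<open>i \<noteq> 1\<close> nu exhaust_3[of i] by auto
  ultimately show ?thesis
    using expectation_unused_service_eq_eps[of "\<pi> _" "A _" pol amax _ \<nu> i] \<open>i \<noteq> 1\<close>
      stationary arr_bound pol arr_mean
    by (auto simp: map_fst_step_dist elim!: eventually_mono)
qed

section \<open>Exponential moment estimates\<close>

lemma norm_exp_diff_le:
  fixes z w :: complex
  assumes "Re z \<le> R" "Re w \<le> R"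
  shows "cmod (exp z - exp w) \<le> exp R * cmod (z - w)"
proof (rule field_differentiable_bound[of "{z. Re z \<le> R}" exp exp])
  show "convex {z. Re z \<le> R}" by (rule convex_halfspace_Re_le)
  show "(exp has_field_derivative exp z) (at z within {z. Re z \<le> R})" for z
    by (intro DERIV_exp has_field_derivative_at_within)
  show "cmod (exp z) \<le> exp R" if "z \<in> {z. Re z \<le> R}" for z
    using that by simp
qed (use assms in auto)

lemma exp_le_1_add_mult_exp: "exp x \<le> 1 + x * exp (x :: real)"
proof -
  have "(1 - x) * exp x \<le> exp (- x) * exp x"
    using exp_ge_add_one_self[of "- x"] by (intro mult_right_mono) auto
  then show ?thesis by (simp add: exp_minus_inverse algebra_simps)
qed

lemma le_inverse_add_mult_square:
  fixes y d :: real
  assumes "0 < d"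
  shows "y \<le> 1 / d + d * y\<^sup>2"
proof -
  have "0 \<le> (d * y - 1 / 2)\<^sup>2" by simp
  then have "d * y \<le> 1 + d * (d * y\<^sup>2)" by (simp add: power2_eq_square algebra_simps)
  then show ?thesis using assms by (simp add: field_simps)
qed

lemma square_mult_exp_le: "(N * exp x)\<^sup>2 \<le> N ^ 4 + exp (4 * x :: real)"
proof -
  have "2 * (N\<^sup>2 * exp (2 * x)) \<le> (N\<^sup>2)\<^sup>2 + (exp (2 * x))\<^sup>2"
    using sum_squares_bound[of "N\<^sup>2" "exp (2 * x)"] by (simp add: algebra_simps)
  moreover have "(N\<^sup>2)\<^sup>2 = N ^ 4" "(exp (2 * x))\<^sup>2 = exp (4 * x)" "(N * exp x)\<^sup>2 = N\<^sup>2 * exp (2 * x)"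
    by (simp_all flip: power_mult exp_of_nat_mult add: power_mult_distrib)
  moreover have "0 \<le> N\<^sup>2 * exp (2 * x)" by simp
  ultimately show ?thesis by linarith
qed

lemma pmf_dominated:
  fixes f :: "'a \<Rightarrow> 'b::{banach, second_countable_topology}"
  assumes "integrable (measure_pmf P) g" "\<And>x. norm (f x) \<le> g x"
  shows "integrable (measure_pmf P) f"
    and "norm (measure_pmf.expectation P f) \<le> measure_pmf.expectation P g"
proof -
  show f: "integrable (measure_pmf P) f"
    using assms by (intro Bochner_Integration.integrable_bound[OF assms(1)] AE_pmfI)
      (auto intro: order_trans[OF _ abs_ge_self])
  have "norm (measure_pmf.expectation P f) \<le> measure_pmf.expectation P (\<lambda>x. norm (f x))"
    by (rule integral_norm_bound)
  also have "\<dots> \<le> measure_pmf.expectation P g"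
    using assms f by (intro integral_mono) auto
  finally show "norm (measure_pmf.expectation P f) \<le> measure_pmf.expectation P g" .
qed

locale exp_moment_bounds =
  fixes P :: "'a pmf" and N :: "'a \<Rightarrow> real" and K e C C4 :: real
  assumes N_nonneg: "\<And>q. 0 \<le> N q" and K_nonneg: "0 \<le> K" and e_pos: "0 < e"
    and integrable_exp: "integrable P (\<lambda>q. exp (e * (4 * K) * N q))"
    and expectation_exp_le: "measure_pmf.expectation P (\<lambda>q. exp (e * (4 * K) * N q)) \<le> C"
    and integrable_pow4: "integrable P (\<lambda>q. N q ^ 4)"
    and expectation_pow4_le: "measure_pmf.expectation P (\<lambda>q. N q ^ 4) \<le> C4"
begin

definition moment_weight :: "'a \<Rightarrow> real" where
  "moment_weight q = N q ^ 4 + exp (e * (4 * K) * N q)"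

lemma moment_weight_nonneg: "0 \<le> moment_weight q"
  using N_nonneg[of q] by (simp add: moment_weight_def)

lemma integrable_moment_weight: "integrable P moment_weight"
  using integrable_pow4 integrable_exp by (simp add: moment_weight_def[abs_def])

lemma expectation_moment_weight_le: "measure_pmf.expectation P moment_weight \<le> C4 + C"
  using integrable_pow4 integrable_exp expectation_pow4_le expectation_exp_le
  by (simp add: moment_weight_def[abs_def])

lemma norm_exp_le:
  assumes "Re g \<le> K * N q"
  shows "cmod (exp (of_real e * g)) \<le> exp (e * K * N q)"
  using assms e_pos by (simp add: mult.assoc)

lemma norm_exp_le_moment:
  assumes "Re g \<le> K * N q"
  shows "cmod (exp (of_real e * g)) \<le> exp (e * (4 * K) * N q)"
proof -
  have "e * K * N q \<le> e * (4 * K) * N q"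
    using e_pos K_nonneg N_nonneg[of q] by (intro mult_right_mono) auto
  then show ?thesis using norm_exp_le[OF assms] by (meson exp_le_cancel_iff order_trans)
qed

lemma norm_exp_diff_le_growth:
  assumes "Re g1 \<le> K * N q" "Re g2 \<le> K * N q" "cmod (g1 - g2) \<le> K * N q"
  shows "cmod (exp (of_real e * g1) - exp (of_real e * g2)) \<le> e * (K * N q * exp (e * K * N q))"
proof -
  have "Re (of_real e * g) \<le> e * K * N q" if "Re g \<le> K * N q" for g
    using that e_pos by (simp add: mult.assoc)
  then have "cmod (exp (of_real e * g1) - exp (of_real e * g2))
      \<le> exp (e * K * N q) * cmod (of_real e * g1 - of_real e * g2)"
    using assms by (intro norm_exp_diff_le) auto
  also have "cmod (of_real e * g1 - of_real e * g2) = e * cmod (g1 - g2)"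
    using e_pos by (simp add: norm_mult flip: right_diff_distrib)
  also have "exp (e * K * N q) * (e * cmod (g1 - g2)) \<le> exp (e * K * N q) * (e * (K * N q))"
    using assms(3) e_pos by (intro mult_left_mono) auto
  finally show ?thesis by (simp add: mult_ac)
qed

text \<open>Young's inequality \<open>y \<le> 1/d + d y\<^sup>2\<close>, where \<open>y\<^sup>2 \<le> K\<^sup>2 N\<^sup>2 exp (2 e K N)\<close> is controlled by the
  moment weight; the weighted estimates take \<open>d = \<surd>e\<close>.\<close>
lemma growth_le:
  assumes "0 < d"
  shows "K * N q * exp (e * K * N q) \<le> 1 / d + d * K\<^sup>2 * moment_weight q"
proof -
  have "(N q * exp (e * K * N q))\<^sup>2 \<le> moment_weight q"
    using square_mult_exp_le[of "N q" "e * K * N q"] by (simp add: moment_weight_def mult_ac)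
  then have "(K * N q * exp (e * K * N q))\<^sup>2 \<le> K\<^sup>2 * moment_weight q"
    by (simp add: power_mult_distrib mult.assoc mult_left_mono)
  then have "d * (K * N q * exp (e * K * N q))\<^sup>2 \<le> d * K\<^sup>2 * moment_weight q"
    using assms by (simp add: mult.assoc mult_left_mono)
  then show ?thesis
    using le_inverse_add_mult_square[OF assms, of "K * N q * exp (e * K * N q)"] by linarith
qed

lemma integrable_exp_mult:
  assumes "\<And>q. Re (g q) \<le> K * N q"
  shows "integrable P (\<lambda>q. exp (of_real e * g q))"
  using pmf_dominated(1)[OF integrable_exp norm_exp_le_moment[OF assms]] .

lemma norm_Eexp_le:
  assumes "\<And>q. Re (g q) \<le> K * N q"
  shows "cmod (measure_pmf.expectation P (\<lambda>q. exp (of_real e * g q))) \<le> C"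
  using pmf_dominated(2)[OF integrable_exp norm_exp_le_moment[OF assms]] expectation_exp_le
  by simp

lemma norm_Eexp_diff_le:
  assumes "\<And>q. Re (g1 q) \<le> K * N q" "\<And>q. Re (g2 q) \<le> K * N q"
    and "\<And>q. cmod (g1 q - g2 q) \<le> K * N q"
  shows "cmod (measure_pmf.expectation P (\<lambda>q. exp (of_real e * g1 q))
      - measure_pmf.expectation P (\<lambda>q. exp (of_real e * g2 q)))
    \<le> e * (1 + K\<^sup>2 * (C4 + C))"
proof -
  define B where "B q = e * (1 + K\<^sup>2 * moment_weight q)" for q
  have "cmod (exp (of_real e * g1 q) - exp (of_real e * g2 q)) \<le> B q" for q
    using order_trans[OF norm_exp_diff_le_growth[OF assms] mult_left_mono[OF growth_le[of 1 q]]] e_pos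
    by (simp add: B_def)
  moreover have "integrable P B"
    using integrable_moment_weight by (simp add: B_def[abs_def])
  moreover have "measure_pmf.expectation P B \<le> e * (1 + K\<^sup>2 * (C4 + C))"
    using integrable_moment_weight expectation_moment_weight_le e_pos K_nonneg
    by (simp add: B_def[abs_def] mult_left_mono)
  ultimately show ?thesis
    using pmf_dominated(2)[of P B "\<lambda>q. exp (of_real e * g1 q) - exp (of_real e * g2 q)"]
      integrable_exp_mult[OF assms(1)] integrable_exp_mult[OF assms(2)]
    by simp
qed

context
  fixes X :: "('a \<times> 'b) pmf" and W :: "'a \<times> 'b \<Rightarrow> real"
  assumes map_fst_X: "map_pmf fst X = P"
    and W_nonneg: "\<And>x. 0 \<le> W x" and W_le_1: "\<And>x. W x \<le> 1"
    and expectation_W: "measure_pmf.expectation X W = e"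
begin

lemma integrable_W: "integrable X W"
  using W_nonneg W_le_1 by (intro measure_pmf.integrable_const_bound[where B = 1]) auto

lemma integrable_moment_weight_fst: "integrable X (\<lambda>x. moment_weight (fst x))"
  using integrable_moment_weight by (simp flip: map_fst_X)

lemma expectation_moment_weight_fst_le:
  "measure_pmf.expectation X (\<lambda>x. moment_weight (fst x)) \<le> C4 + C"
  using expectation_moment_weight_le integral_map_pmf[of fst X moment_weight] by (simp add: map_fst_X)

lemma norm_weighted_Eexp_le:
  assumes "\<And>q. Re (g q) \<le> K * N q"
  shows "integrable X (\<lambda>x. of_real (W x) * exp (of_real e * g (fst x)))"
    and "cmod (measure_pmf.expectation X (\<lambda>x. of_real (W x) * exp (of_real e * g (fst x))))
      \<le> e * (2 + K\<^sup>2 * (C4 + C))"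
proof -
  define G where "G x = e * (1 + K\<^sup>2 * moment_weight (fst x))" for x :: "'a \<times> 'b"
  define B where "B x = W x + G x" for x
  have bound: "cmod (of_real (W x) * exp (of_real e * g (fst x))) \<le> B x" for x
  proof -
    have "cmod (exp (of_real e * g (fst x))) \<le> 1 + e * (K * N (fst x) * exp (e * K * N (fst x)))"
      using order_trans[OF norm_exp_le[OF assms] exp_le_1_add_mult_exp] by (simp add: mult_ac)
    also have "\<dots> \<le> 1 + G x"
      using growth_le[of 1 "fst x"] e_pos by (simp add: G_def mult_left_mono)
    finally have "W x * cmod (exp (of_real e * g (fst x))) \<le> W x * (1 + G x)"
      using W_nonneg by (rule mult_left_mono)
    moreover have "W x * G x \<le> G x"
      using W_nonneg[of x] W_le_1[of x] e_pos moment_weight_nonneg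
      by (intro mult_left_le_one_le) (auto simp: G_def)
    ultimately show ?thesis
      using W_nonneg[of x] by (simp add: B_def norm_mult algebra_simps)
  qed
  have integrable_B: "integrable X B"
    using integrable_W integrable_moment_weight_fst by (simp add: B_def[abs_def] G_def)
  have "measure_pmf.expectation X B
      = e + e * (1 + K\<^sup>2 * measure_pmf.expectation X (\<lambda>x. moment_weight (fst x)))"
    using integrable_W integrable_moment_weight_fst by (simp add: B_def[abs_def] G_def expectation_W)
  moreover have "e * (1 + K\<^sup>2 * measure_pmf.expectation X (\<lambda>x. moment_weight (fst x)))
      \<le> e * (1 + K\<^sup>2 * (C4 + C))"
    using expectation_moment_weight_fst_le e_pos by (simp add: mult_left_mono)
  ultimately have "measure_pmf.expectation X B \<le> e * (2 + K\<^sup>2 * (C4 + C))"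
    by (simp add: algebra_simps)
  then show "cmod (measure_pmf.expectation X (\<lambda>x. of_real (W x) * exp (of_real e * g (fst x))))
      \<le> e * (2 + K\<^sup>2 * (C4 + C))"
    using pmf_dominated(2)[OF integrable_B bound] by linarith
  show "integrable X (\<lambda>x. of_real (W x) * exp (of_real e * g (fst x)))"
    using pmf_dominated(1)[OF integrable_B bound] .
qed

lemma norm_weighted_Eexp_diff_le:
  assumes "\<And>q. Re (g1 q) \<le> K * N q" "\<And>q. Re (g2 q) \<le> K * N q"
    and "\<And>x. W x \<noteq> 0 \<Longrightarrow> cmod (g1 (fst x) - g2 (fst x)) \<le> K * N (fst x)"
  shows "cmod (measure_pmf.expectation X (\<lambda>x. of_real (W x) * exp (of_real e * g1 (fst x)))
      - measure_pmf.expectation X (\<lambda>x. of_real (W x) * exp (of_real e * g2 (fst x))))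
    \<le> e * sqrt e * (1 + K\<^sup>2 * (C4 + C))"
proof -
  define d where "d = sqrt e"
  have d: "0 < d" "e / d = d"
    using e_pos by (simp_all add: d_def real_div_sqrt)
  define B where "B x = e * (W x / d + d * K\<^sup>2 * moment_weight (fst x))" for x :: "'a \<times> 'b"
  have bound: "cmod (of_real (W x) * exp (of_real e * g1 (fst x))
      - of_real (W x) * exp (of_real e * g2 (fst x))) \<le> B x" for x
  proof (cases "W x = 0")
    case True
    then show ?thesis using d e_pos moment_weight_nonneg by (simp add: B_def)
  next
    case False
    have "cmod (of_real (W x) * exp (of_real e * g1 (fst x)) - of_real (W x) * exp (of_real e * g2 (fst x)))
        = W x * cmod (exp (of_real e * g1 (fst x)) - exp (of_real e * g2 (fst x)))"
      using W_nonneg[of x] by (simp add: norm_mult flip: right_diff_distrib)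
    also have "\<dots> \<le> W x * (e * (1 / d + d * K\<^sup>2 * moment_weight (fst x)))"
      using order_trans[OF norm_exp_diff_le_growth mult_left_mono[OF growth_le[OF d(1)]]]
        assms False W_nonneg[of x] e_pos
      by (intro mult_left_mono) auto
    also have "\<dots> \<le> B x"
    proof -
      define Z where "Z = d * K\<^sup>2 * moment_weight (fst x)"
      have "W x * Z \<le> Z"
        using W_le_1[of x] W_nonneg[of x] d moment_weight_nonneg[of "fst x"]
        by (intro mult_left_le_one_le) (simp_all add: Z_def)
      then have "e * (W x * Z) \<le> e * Z" using e_pos by simp
      then show ?thesis by (simp add: B_def flip: Z_def) (simp add: algebra_simps)
    qed
    finally show ?thesis .
  qed
  have integrable_B: "integrable X B"
    using integrable_W integrable_moment_weight_fst by (simp add: B_def[abs_def])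
  have "measure_pmf.expectation X B
      = e * (d + d * K\<^sup>2 * measure_pmf.expectation X (\<lambda>x. moment_weight (fst x)))"
    using integrable_W integrable_moment_weight_fst d by (simp add: B_def[abs_def] expectation_W)
  also have "\<dots> \<le> e * (d + d * K\<^sup>2 * (C4 + C))"
    using expectation_moment_weight_fst_le e_pos d by (simp add: mult_left_mono)
  finally have "measure_pmf.expectation X B \<le> e * sqrt e * (1 + K\<^sup>2 * (C4 + C))"
    by (simp add: d_def algebra_simps)
  moreover have "measure_pmf.expectation X (\<lambda>x. of_real (W x) * exp (of_real e * g1 (fst x)))
      - measure_pmf.expectation X (\<lambda>x. of_real (W x) * exp (of_real e * g2 (fst x)))
    = measure_pmf.expectation X (\<lambda>x. of_real (W x) * exp (of_real e * g1 (fst x))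
      - of_real (W x) * exp (of_real e * g2 (fst x)))"
    using norm_weighted_Eexp_le(1)[OF assms(1)] norm_weighted_Eexp_le(1)[OF assms(2)]
    by (rule Bochner_Integration.integral_diff[symmetric])
  ultimately show ?thesis
    using pmf_dominated(2)[OF integrable_B bound] by simp
qed

end

end

locale exp_moment_bounded_family =
  fixes \<pi> :: "real \<Rightarrow> 'a pmf" and N :: "'a \<Rightarrow> real" and K C C4 :: real
  assumes eventually_exp_moment_bounds: "\<forall>\<^sub>F \<epsilon> in at_right 0. exp_moment_bounds (\<pi> \<epsilon>) N K \<epsilon> C C4"
begin

lemma eventually_integrable_exp_mult:
  assumes "\<And>q. Re (g q) \<le> K * N q"
  shows "\<forall>\<^sub>F \<epsilon> in at_right 0. integrable (\<pi> \<epsilon>) (\<lambda>q. exp (of_real \<epsilon> * g q))"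
  using eventually_exp_moment_bounds
  by eventually_elim (rule exp_moment_bounds.integrable_exp_mult[OF _ assms])

lemma eventually_norm_Eexp_le:
  assumes "\<And>q. Re (g q) \<le> K * N q"
  shows "\<forall>\<^sub>F \<epsilon> in at_right 0. cmod (measure_pmf.expectation (\<pi> \<epsilon>) (\<lambda>q. exp (of_real \<epsilon> * g q))) \<le> C"
  using eventually_exp_moment_bounds
  by eventually_elim (rule exp_moment_bounds.norm_Eexp_le[OF _ assms])

lemma tendsto_Eexp_diff_0:
  assumes "\<And>q. Re (g1 q) \<le> K * N q" "\<And>q. Re (g2 q) \<le> K * N q"
    and "\<And>q. cmod (g1 q - g2 q) \<le> K * N q"
  shows "((\<lambda>\<epsilon>. measure_pmf.expectation (\<pi> \<epsilon>) (\<lambda>q. exp (of_real \<epsilon> * g1 q))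
      - measure_pmf.expectation (\<pi> \<epsilon>) (\<lambda>q. exp (of_real \<epsilon> * g2 q))) \<longlongrightarrow> 0) (at_right 0)"
proof (rule Lim_null_comparison)
  show "\<forall>\<^sub>F \<epsilon> in at_right 0. norm (measure_pmf.expectation (\<pi> \<epsilon>) (\<lambda>q. exp (of_real \<epsilon> * g1 q))
      - measure_pmf.expectation (\<pi> \<epsilon>) (\<lambda>q. exp (of_real \<epsilon> * g2 q))) \<le> \<epsilon> * (1 + K\<^sup>2 * (C4 + C))"
    using eventually_exp_moment_bounds
    by eventually_elim (rule exp_moment_bounds.norm_Eexp_diff_le[OF _ assms])
  show "((\<lambda>\<epsilon>. \<epsilon> * (1 + K\<^sup>2 * (C4 + C))) \<longlongrightarrow> 0) (at_right 0)"
    by (auto intro!: tendsto_eq_intros)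
qed

context
  fixes X :: "real \<Rightarrow> ('a \<times> 'b) pmf" and W :: "'a \<times> 'b \<Rightarrow> real"
  assumes eventually_weights:
      "\<forall>\<^sub>F \<epsilon> in at_right 0. map_pmf fst (X \<epsilon>) = \<pi> \<epsilon> \<and> measure_pmf.expectation (X \<epsilon>) W = \<epsilon>"
    and W_nonneg: "\<And>x. 0 \<le> W x" and W_le_1: "\<And>x. W x \<le> 1"
begin

lemma eventually_norm_weighted_Eexp_le:
  assumes "\<And>q. Re (g q) \<le> K * N q"
  shows "\<forall>\<^sub>F \<epsilon> in at_right 0.
    cmod (measure_pmf.expectation (X \<epsilon>) (\<lambda>x. of_real (W x) * exp (of_real \<epsilon> * g (fst x)))) / \<epsilon>
      \<le> 2 + K\<^sup>2 * (C4 + C)"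
  using eventually_exp_moment_bounds eventually_weights
proof eventually_elim
  case (elim \<epsilon>)
  then have "cmod (measure_pmf.expectation (X \<epsilon>) (\<lambda>x. of_real (W x) * exp (of_real \<epsilon> * g (fst x))))
      \<le> \<epsilon> * (2 + K\<^sup>2 * (C4 + C))"
    by (intro exp_moment_bounds.norm_weighted_Eexp_le(2)[where X = "X \<epsilon>" and W = W])
      (auto simp: W_nonneg W_le_1 assms)
  then show ?case
    using exp_moment_bounds.e_pos[OF elim(1)] by (simp add: divide_le_eq mult.commute)
qed

lemma tendsto_weighted_Eexp_diff_0:
  assumes "\<And>q. Re (g1 q) \<le> K * N q" "\<And>q. Re (g2 q) \<le> K * N q"
    and "\<And>x. W x \<noteq> 0 \<Longrightarrow> cmod (g1 (fst x) - g2 (fst x)) \<le> K * N (fst x)"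
  shows "((\<lambda>\<epsilon>. (measure_pmf.expectation (X \<epsilon>) (\<lambda>x. of_real (W x) * exp (of_real \<epsilon> * g1 (fst x)))
      - measure_pmf.expectation (X \<epsilon>) (\<lambda>x. of_real (W x) * exp (of_real \<epsilon> * g2 (fst x))))
      / of_real \<epsilon>) \<longlongrightarrow> 0) (at_right 0)"
proof (rule Lim_null_comparison)
  show "\<forall>\<^sub>F \<epsilon> in at_right 0.
    norm ((measure_pmf.expectation (X \<epsilon>) (\<lambda>x. of_real (W x) * exp (of_real \<epsilon> * g1 (fst x)))
      - measure_pmf.expectation (X \<epsilon>) (\<lambda>x. of_real (W x) * exp (of_real \<epsilon> * g2 (fst x))))
      / of_real \<epsilon>) \<le> sqrt \<epsilon> * (1 + K\<^sup>2 * (C4 + C))"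
    using eventually_exp_moment_bounds eventually_weights
  proof eventually_elim
    case (elim \<epsilon>)
    then have "cmod (measure_pmf.expectation (X \<epsilon>) (\<lambda>x. of_real (W x) * exp (of_real \<epsilon> * g1 (fst x)))
        - measure_pmf.expectation (X \<epsilon>) (\<lambda>x. of_real (W x) * exp (of_real \<epsilon> * g2 (fst x))))
      \<le> \<epsilon> * sqrt \<epsilon> * (1 + K\<^sup>2 * (C4 + C))"
      by (intro exp_moment_bounds.norm_weighted_Eexp_diff_le[where X = "X \<epsilon>" and W = W])
        (use elim assms W_nonneg W_le_1 in blast)+
    then show ?case
      using exp_moment_bounds.e_pos[OF elim(1)] by (simp add: norm_divide divide_le_eq mult_ac)
  qed
  show "((\<lambda>\<epsilon>. sqrt \<epsilon> * (1 + K\<^sup>2 * (C4 + C))) \<longlongrightarrow> 0) (at_right 0)"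
    by (auto intro!: tendsto_eq_intros)
qed

end

end

lemma exp_moment_bounded_familyI:
  fixes \<pi> :: "real \<Rightarrow> 'a pmf" and N :: "'a \<Rightarrow> real"
  assumes N_nonneg: "\<And>q. 0 \<le> N q" and K_nonneg: "0 \<le> K"
    and exp_moments: "\<forall>\<theta>::real. \<exists>\<epsilon>0>0. \<exists>C. \<forall>\<epsilon>. 0 < \<epsilon> \<and> \<epsilon> \<le> \<epsilon>0 \<and> \<epsilon> < 1 \<longrightarrow>
        integrable (measure_pmf (\<pi> \<epsilon>)) (\<lambda>q. exp (\<epsilon> * \<theta> * N q))
        \<and> measure_pmf.expectation (\<pi> \<epsilon>) (\<lambda>q. exp (\<epsilon> * \<theta> * N q)) < C"
    and power_moments: "\<forall>r::real. r \<ge> 1 \<longrightarrow> (\<exists>C. \<forall>\<epsilon>\<in>{0<..<1}.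
        integrable (measure_pmf (\<pi> \<epsilon>)) (\<lambda>q. N q powr r)
        \<and> measure_pmf.expectation (\<pi> \<epsilon>) (\<lambda>q. N q powr r) \<le> C)"
  obtains C C4 where "exp_moment_bounded_family \<pi> N K C C4"
proof -
  obtain \<epsilon>0 C where "\<epsilon>0 > 0" and exp_bound: "\<And>\<epsilon>. 0 < \<epsilon> \<Longrightarrow> \<epsilon> \<le> \<epsilon>0 \<Longrightarrow> \<epsilon> < 1 \<Longrightarrow>
      integrable (measure_pmf (\<pi> \<epsilon>)) (\<lambda>q. exp (\<epsilon> * (4 * K) * N q))
      \<and> measure_pmf.expectation (\<pi> \<epsilon>) (\<lambda>q. exp (\<epsilon> * (4 * K) * N q)) < C"
    using exp_moments by blast
  obtain C4 where pow_bound: "\<And>\<epsilon>. \<epsilon> \<in> {0<..<1} \<Longrightarrow>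
      integrable (measure_pmf (\<pi> \<epsilon>)) (\<lambda>q. N q powr 4)
      \<and> measure_pmf.expectation (\<pi> \<epsilon>) (\<lambda>q. N q powr 4) \<le> C4"
    using power_moments by (metis one_le_numeral)
  have "(\<lambda>q. N q powr 4) = (\<lambda>q. N q ^ 4)"
    using N_nonneg by (simp add: powr_numeral)
  then have "exp_moment_bounds (\<pi> \<epsilon>) N K \<epsilon> C C4" if "0 < \<epsilon>" "\<epsilon> < min \<epsilon>0 1" for \<epsilon>
    using exp_bound[of \<epsilon>] pow_bound[of \<epsilon>] that N_nonneg K_nonneg
    by unfold_locales auto
  then have "exp_moment_bounded_family \<pi> N K C C4"
    using \<open>\<epsilon>0 > 0\<close>
    by unfold_locales (auto simp: eventually_at_right_field intro!: exI[of _ "min \<epsilon>0 1"])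
  then show thesis by (rule that)
qed

lemma eventually_common_upper_bound:
  fixes f g h :: "'a \<Rightarrow> real"
  assumes "\<forall>\<^sub>F x in F. f x \<le> a" "\<forall>\<^sub>F x in F. g x \<le> b" "\<forall>\<^sub>F x in F. h x \<le> c"
  shows "\<exists>C. \<forall>\<^sub>F x in F. f x \<le> C \<and> g x \<le> C \<and> h x \<le> C"
proof
  show "\<forall>\<^sub>F x in F. f x \<le> max a (max b c) \<and> g x \<le> max a (max b c) \<and> h x \<le> max a (max b c)"
    using assms by eventually_elim auto
qed

theorem lemma5:
  fixes \<nu> :: "real ^ 3" and amax :: nat
    and A :: "real \<Rightarrow> (nat ^ 3) pmf"
    and pol :: "nat ^ 3 \<Rightarrow> bool pmf"
    and \<pi> :: "real \<Rightarrow> (nat ^ 3) pmf"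
    and \<theta>t :: "complex ^ 3" and \<phi> :: "complex ^ 2"
  assumes nu: "\<nu> $ 1 + \<nu> $ 2 = 1" "\<nu> $ 1 + \<nu> $ 3 = 1" "\<forall>i. \<nu> $ i > 0"
    and pol: "\<forall>q. True \<in> set_pmf (pol q) \<longrightarrow> q $ 1 > 0"
    and arr_bound: "\<forall>\<epsilon>\<in>{0<..<1}. \<forall>a\<in>set_pmf (A \<epsilon>). \<forall>i. a $ i \<le> amax"
    and arr_mean: "\<forall>\<epsilon>\<in>{0<..<1}. \<forall>i.
        measure_pmf.expectation (A \<epsilon>) (\<lambda>a. real (a $ i)) = (1 - \<epsilon>) * \<nu> $ i"
    and arr_cov: "\<forall>\<epsilon>\<in>{0<..<1}. \<forall>i j. i \<noteq> j \<longrightarrow>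
        measure_pmf.expectation (A \<epsilon>) (\<lambda>a. real (a $ i) * real (a $ j))
        = measure_pmf.expectation (A \<epsilon>) (\<lambda>a. real (a $ i))
          * measure_pmf.expectation (A \<epsilon>) (\<lambda>a. real (a $ j))"
    and stationary: "\<forall>\<epsilon>\<in>{0<..<1}. \<pi> \<epsilon> \<bind> kernel (A \<epsilon>) pol = \<pi> \<epsilon>"
    and irreducible: "\<forall>\<epsilon>\<in>{0<..<1}. \<forall>x\<in>set_pmf (\<pi> \<epsilon>). \<forall>y\<in>set_pmf (\<pi> \<epsilon>).
        \<exists>n. y \<in> set_pmf (kernel_pow (A \<epsilon>) pol n x)"
    and aperiodic: "\<forall>\<epsilon>\<in>{0<..<1}. \<forall>x\<in>set_pmf (\<pi> \<epsilon>).
        Gcd {n. n > 0 \<and> x \<in> set_pmf (kernel_pow (A \<epsilon>) pol n x)} = 1"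
    and ssc_exp: "\<forall>\<theta>::real. \<exists>\<epsilon>0>0. \<exists>C. \<forall>\<epsilon>. 0 < \<epsilon> \<and> \<epsilon> \<le> \<epsilon>0 \<and> \<epsilon> < 1 \<longrightarrow>
        integrable (measure_pmf (\<pi> \<epsilon>)) (\<lambda>q. exp (\<epsilon> * \<theta> * norm (qperp q)))
        \<and> measure_pmf.expectation (\<pi> \<epsilon>) (\<lambda>q. exp (\<epsilon> * \<theta> * norm (qperp q))) < C"
    and ssc_mom: "\<forall>r::real. r \<ge> 1 \<longrightarrow> (\<exists>C. \<forall>\<epsilon>\<in>{0<..<1}.
        integrable (measure_pmf (\<pi> \<epsilon>)) (\<lambda>q. norm (qperp q) powr r)
        \<and> measure_pmf.expectation (\<pi> \<epsilon>) (\<lambda>q. norm (qperp q) powr r) \<le> C)"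
    and theta: "projC \<theta>t = Bmat *v \<phi>" "Bmat *v \<phi> \<in> Theta"
  shows
    "(\<forall>\<theta>\<in>{\<theta>t, projC \<theta>t}.
        eventually (\<lambda>\<epsilon>. integrable (measure_pmf (\<pi> \<epsilon>)) (\<lambda>q. exp (of_real \<epsilon> * cinner \<theta> q)))
          (at_right 0)
      \<and> (\<exists>C. eventually (\<lambda>\<epsilon>.
             cmod (Eexp (\<pi> \<epsilon>) (\<lambda>q. of_real \<epsilon> * cinner \<theta> q)) \<le> C
           \<and> cmod (Eu (step_dist (\<pi> \<epsilon>) (A \<epsilon>) pol) 2 (\<lambda>q. of_real \<epsilon> * cinner \<theta> q)) / \<epsilon> \<le> C
           \<and> cmod (Eu (step_dist (\<pi> \<epsilon>) (A \<epsilon>) pol) 3 (\<lambda>q. of_real \<epsilon> * cinner \<theta> q)) / \<epsilon> \<le> C)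
          (at_right 0)))
   \<and> (((\<lambda>\<epsilon>. Eexp (\<pi> \<epsilon>) (\<lambda>q. of_real \<epsilon> * cinner \<theta>t q)
           - Eexp (\<pi> \<epsilon>) (\<lambda>q. of_real \<epsilon> * cinner (projC \<theta>t) q)) \<longlongrightarrow> 0) (at_right 0))
   \<and> (((\<lambda>\<epsilon>. Eexp (\<pi> \<epsilon>) (\<lambda>q. of_real \<epsilon> * cinner (projC \<theta>t) q)
           - Eexp (\<pi> \<epsilon>) (\<lambda>q. of_real \<epsilon> * ((2 * \<phi> $ 1 + \<phi> $ 2) * of_nat (q $ 2)
                                       + (\<phi> $ 1 + 2 * \<phi> $ 2) * of_nat (q $ 3))))
       \<longlongrightarrow> 0) (at_right 0))
   \<and> (((\<lambda>\<epsilon>. (Eu (step_dist (\<pi> \<epsilon>) (A \<epsilon>) pol) 2 (\<lambda>q. of_real \<epsilon> * cinner \<theta>t q)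
            - Eu (step_dist (\<pi> \<epsilon>) (A \<epsilon>) pol) 2 (\<lambda>q. of_real \<epsilon> * cinner (projC \<theta>t) q)) / of_real \<epsilon>)
       \<longlongrightarrow> 0) (at_right 0))
   \<and> (((\<lambda>\<epsilon>. (Eu (step_dist (\<pi> \<epsilon>) (A \<epsilon>) pol) 2 (\<lambda>q. of_real \<epsilon> * cinner (projC \<theta>t) q)
            - Eu (step_dist (\<pi> \<epsilon>) (A \<epsilon>) pol) 2
                (\<lambda>q. of_real \<epsilon> * (\<phi> $ 1 + 2 * \<phi> $ 2) * of_nat (q $ 3))) / of_real \<epsilon>)
       \<longlongrightarrow> 0) (at_right 0))
   \<and> (((\<lambda>\<epsilon>. (Eu (step_dist (\<pi> \<epsilon>) (A \<epsilon>) pol) 3 (\<lambda>q. of_real \<epsilon> * cinner \<theta>t q)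
            - Eu (step_dist (\<pi> \<epsilon>) (A \<epsilon>) pol) 3 (\<lambda>q. of_real \<epsilon> * cinner (projC \<theta>t) q)) / of_real \<epsilon>)
       \<longlongrightarrow> 0) (at_right 0))
   \<and> (((\<lambda>\<epsilon>. (Eu (step_dist (\<pi> \<epsilon>) (A \<epsilon>) pol) 3 (\<lambda>q. of_real \<epsilon> * cinner (projC \<theta>t) q)
            - Eu (step_dist (\<pi> \<epsilon>) (A \<epsilon>) pol) 3
                (\<lambda>q. of_real \<epsilon> * (2 * \<phi> $ 1 + \<phi> $ 2) * of_nat (q $ 2))) / of_real \<epsilon>)
       \<longlongrightarrow> 0) (at_right 0))"
proof -
  interpret projected_direction \<theta>t \<phi>
    using theta by unfold_locales
  obtain C C4 where "exp_moment_bounded_family \<pi> (\<lambda>q. norm (qperp q)) dominating_const C C4"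
    using exp_moment_bounded_familyI[OF _ dominating_const_nonneg ssc_exp ssc_mom] by auto
  then interpret exp_moment_bounded_family \<pi> "\<lambda>q. norm (qperp q)" dominating_const C C4 .
  have "(2 :: 3) \<noteq> 1" "(3 :: 3) \<noteq> 1" by simp_all
  note weights = this[THEN eventually_expectation_unused_service[OF nu(1,2) pol arr_bound arr_mean stationary]]
  note weighted_le = eventually_norm_weighted_Eexp_le[OF _ unused_service_nonneg unused_service_le_1]
  note weighted_tendsto = tendsto_weighted_Eexp_diff_0[OF _ unused_service_nonneg unused_service_le_1]
  show ?thesis
    unfolding Eexp_def Eu_eq_expectation_unused_service mult.assoc
    using eventually_integrable_exp_mult[OF Re_cinner_le] eventually_integrable_exp_mult[OF Re_cinner_projC_le]
      eventually_common_upper_bound[OF eventually_norm_Eexp_le[OF Re_cinner_le]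
        weighted_le[OF weights(1) Re_cinner_le] weighted_le[OF weights(2) Re_cinner_le]]
      eventually_common_upper_bound[OF eventually_norm_Eexp_le[OF Re_cinner_projC_le]
        weighted_le[OF weights(1) Re_cinner_projC_le] weighted_le[OF weights(2) Re_cinner_projC_le]]
      tendsto_Eexp_diff_0[OF Re_cinner_le Re_cinner_projC_le norm_cinner_diff_projC_le]
      tendsto_Eexp_diff_0[OF Re_cinner_projC_le Re_exponents_le(3) norm_cinner_projC_diff_exponents_le]
      weighted_tendsto[OF weights(1) Re_cinner_le Re_cinner_projC_le norm_cinner_diff_projC_le]
      weighted_tendsto[OF weights(1) Re_cinner_projC_le Re_exponents_le(2)
        norm_cinner_projC_diff_exponent3_le[OF queue_empty_if_unused_service]]
      weighted_tendsto[OF weights(2) Re_cinner_le Re_cinner_projC_le norm_cinner_diff_projC_le]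
      weighted_tendsto[OF weights(2) Re_cinner_projC_le Re_exponents_le(1)
        norm_cinner_projC_diff_exponent2_le[OF queue_empty_if_unused_service]]
    by auto
qed

end
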